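(* Let $\Omega\subset\mathbb{R}^d$ be a bounded domain, $\kappa\in L^\infty(\Omega)$ with $\kappa\ge\kappa_0>0$, $a(u,v)=\int_\Omega\kappa\nabla u\cdot\nabla v\,dx$, $\|u\|_a^2=a(u,u)$. Let $V_{H,1},V_{H,2}\subset H^1_0(\Omega)$ be finite-dimensional, $L^2(\Omega)$-orthogonal subspaces, $\tau>0$, $N\ge2$. Let $u_{H,1}^n\in V_{H,1}$, $u_{H,2}^n\in V_{H,2}$ ($n=0,\dots,N$) satisfy for $n=1,\dots,N-1$ the scheme $$(u_{H,1}^{n+1}-2u_{H,1}^n+u_{H,1}^{n-1},w)+\frac{\tau^2}{2}a(u_{H,1}^{n+1}+u_{H,1}^{n-1}+2u_{H,2}^n,w)=0\quad\forall w\in V_{H,1},$$ $$(u_{H,2}^{n+1}-2u_{H,2}^n+u_{H,2}^{n-1},w)+\frac{\tau^2}{2}a(u_{H,1}^{n+1}+u_{H,1}^{n-1}+2u_{H,2}^n,w)=0\quad\forall w\in V_{H,2}.$$ Define $(u,v)_{m_\tau}=(u,v)+\frac{\tau^2}{2}a(u,v)$, $\|v\|_{m_\tau}^2=(v,v)_{m_\tau}$; operators $b_\tau:V_{H,1}\to V_{H,1}$, $c_\tau,d_\tau:V_{H,1}+V_{H,2}\to V_{H,1}$ by $(b_\tau(v_1),v)_{m_\tau}=(v_1,v)$, $(c_\tau(u),v)_{m_\tau}=\frac{\tau^2}{2}a(u,v)$, $a(d_\tau(u),v)=a(u,v)$ for all $v\in V_{H,1}$; $\|v_1\|_{s_\tau}^2=\|v_1\|^2-\|b_\tau(v_1)\|_{m_\tau}^2$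 for $v_1\in V_{H,1}$; and $\|v_2\|_{n_\tau}^2=\frac{\tau^2}{2}\|v_2\|_a^2-\|c_\tau(v_2)\|_{m_\tau}^2-\|d_\tau(v_2)\|_{s_\tau}^2$ for $v_2\in V_{H,2}$. Let $$E^{n+\frac12}=\|b_\tau(u_{H,1}^{n+1})-c_\tau(u_{H,2}^{n+1})-b_\tau(u_{H,1}^n)+c_\tau(u_{H,2}^n)\|_{m_\tau}^2+\|u_{H,2}^{n+1}-u_{H,2}^n\|^2-\frac{\tau^2}{2}\|u_{H,2}^{n+1}-u_{H,2}^n\|_a^2$$ $$+\|u_{H,1}^{n+1}+d_\tau(u_{H,2}^{n+1})\|_{s_\tau}^2+\|u_{H,2}^{n+1}\|_{n_\tau}^2+\|u_{H,1}^n+d_\tau(u_{H,2}^n)\|_{s_\tau}^2+\|u_{H,2}^n\|_{n_\tau}^2.$$ Then $E^{n+\frac12}=E^{n-\frac12}$ for $n=1,\dots,N-1$, and the scheme is stable provided $\sup_{v\in V_{H,2}}\frac{\|v\|_a^2}{\|v\|^2}\le\frac{2}{\tau^2}$: in that case each of the terms in $E^{n+\frac12}$ (grouping $\|u_{H,2}^{n+1}-u_{H,2}^n\|^2-\frac{\tau^2}{2}\|u_{H,2}^{n+1}-u_{H,2}^n\|_a^2$ as one term) is nonnegative and hence bounded by $E^{\frac12}$ for all $n=0,\dots,N-1$.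
   Context: $(\cdot,\cdot)$ and $\|\cdot\|$ denote the $L^2(\Omega)$ inner product and norm. The scheme is the $\omega=0$ variant of the partially explicit splitting for the wave equation $u_{tt}=\nabla\cdot(\kappa\nabla u)$ with homogeneous Dirichlet boundary conditions, written under $L^2$-orthogonality of $V_{H,1}$ and $V_{H,2}$. *)

theory Defs
  imports "HOL-Analysis.Analysis"
begin

text \<open>Abstract setting: the type 'a stands for H^1_0(Omega) equipped with the
L^2(Omega) inner product (inner, norm); a is the energy bilinear form
a(u,v) = int kappa grad u . grad v.\<close>

definition mt_inner :: "('a::real_inner \<Rightarrow> 'a \<Rightarrow> real) \<Rightarrow> real \<Rightarrow> 'a \<Rightarrow> 'a \<Rightarrow> real" where
  "mt_inner a \<tau> u v = inner u v + \<tau>^2 / 2 * a u v"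

definition mt_norm2 :: "('a::real_inner \<Rightarrow> 'a \<Rightarrow> real) \<Rightarrow> real \<Rightarrow> 'a \<Rightarrow> real" where
  "mt_norm2 a \<tau> v = mt_inner a \<tau> v v"

definition b_op :: "('a::real_inner \<Rightarrow> 'a \<Rightarrow> real) \<Rightarrow> real \<Rightarrow> 'a set \<Rightarrow> 'a \<Rightarrow> 'a" where
  "b_op a \<tau> V1 v1 = (THE b. b \<in> V1 \<and> (\<forall>v\<in>V1. mt_inner a \<tau> b v = inner v1 v))"

definition c_op :: "('a::real_inner \<Rightarrow> 'a \<Rightarrow> real) \<Rightarrow> real \<Rightarrow> 'a set \<Rightarrow> 'a \<Rightarrow> 'a" where
  "c_op a \<tau> V1 u = (THE c. c \<in> V1 \<and> (\<forall>v\<in>V1. mt_inner a \<tau> c v = \<tau>^2 / 2 * a u v))"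

definition d_op :: "('a::real_inner \<Rightarrow> 'a \<Rightarrow> real) \<Rightarrow> 'a set \<Rightarrow> 'a \<Rightarrow> 'a" where
  "d_op a V1 u = (THE d. d \<in> V1 \<and> (\<forall>v\<in>V1. a d v = a u v))"

definition s_norm2 :: "('a::real_inner \<Rightarrow> 'a \<Rightarrow> real) \<Rightarrow> real \<Rightarrow> 'a set \<Rightarrow> 'a \<Rightarrow> real" where
  "s_norm2 a \<tau> V1 v1 = (norm v1)^2 - mt_norm2 a \<tau> (b_op a \<tau> V1 v1)"

definition n_norm2 :: "('a::real_inner \<Rightarrow> 'a \<Rightarrow> real) \<Rightarrow> real \<Rightarrow> 'a set \<Rightarrow> 'a \<Rightarrow> real" where
  "n_norm2 a \<tau> V1 v2 = \<tau>^2 / 2 * a v2 v2 - mt_norm2 a \<tau> (c_op a \<tau> V1 v2)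
      - s_norm2 a \<tau> V1 (d_op a V1 v2)"

definition E_terms :: "('a::real_inner \<Rightarrow> 'a \<Rightarrow> real) \<Rightarrow> real \<Rightarrow> 'a set \<Rightarrow> (nat \<Rightarrow> 'a) \<Rightarrow> (nat \<Rightarrow> 'a) \<Rightarrow> nat \<Rightarrow> real list" where
  "E_terms a \<tau> V1 u1 u2 n =
    [ mt_norm2 a \<tau> (b_op a \<tau> V1 (u1 (n+1)) - c_op a \<tau> V1 (u2 (n+1))
                    - b_op a \<tau> V1 (u1 n) + c_op a \<tau> V1 (u2 n)),
      (norm (u2 (n+1) - u2 n))^2 - \<tau>^2 / 2 * a (u2 (n+1) - u2 n) (u2 (n+1) - u2 n),
      s_norm2 a \<tau> V1 (u1 (n+1) + d_op a V1 (u2 (n+1))),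
      n_norm2 a \<tau> V1 (u2 (n+1)),
      s_norm2 a \<tau> V1 (u1 n + d_op a V1 (u2 n)),
      n_norm2 a \<tau> V1 (u2 n) ]"

definition energy :: "('a::real_inner \<Rightarrow> 'a \<Rightarrow> real) \<Rightarrow> real \<Rightarrow> 'a set \<Rightarrow> (nat \<Rightarrow> 'a) \<Rightarrow> (nat \<Rightarrow> 'a) \<Rightarrow> nat \<Rightarrow> real" where
  "energy a \<tau> V1 u1 u2 n = sum_list (E_terms a \<tau> V1 u1 u2 n)"

end

theory Submission
  imports Defs
begin

text \<open>The operators b, c, d exist and are unique by Riesz representation in the
finite-dimensional space V1 for the inner products m and a. Testing the V1-equation against
V1 gives u1(n+1) + u1(n-1) = 2 (b u1(n) - c u2(n)); with this, testing the V2-equation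
against u2(n+1) - u2(n-1) makes the reduced energy
  |u1(n+1)|^2 + |u1(n)|^2 + |u2(n+1) - u2(n)|^2 + tau^2 a(u2(n+1), u2(n))
    - 2 m(b u1(n+1) - c u2(n+1), b u1(n) - c u2(n))
telescope, and by s(x + d y) + n(y) = |x|^2 - |b x - c y|_m^2 + tau^2/2 |y|_a^2 this reduced
energy is E(n+1/2). Stability follows from s(v) = |v - b v|^2 + tau^2/2 |b v|_a^2 and
n(y) = tau^2/2 |y - d y|_a^2, together with the CFL condition for the remaining term.\<close>

lemma bilinear_orthogonal_expansion:
  fixes g :: "'a::real_vector \<Rightarrow> 'a \<Rightarrow> real"
  assumes "bilinear g" "finite C" "pairwise (\<lambda>x y. g x y = 0) C"
    and "\<And>c. c \<in> C \<Longrightarrow> g c c \<noteq> 0" and "c0 \<in> C"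
  shows "g (\<Sum>c\<in>C. (k c / g c c) *\<^sub>R c) c0 = k c0"
proof -
  have "linear (\<lambda>x. g x c0)" using assms(1) by (simp add: bilinear_def)
  then have "g (\<Sum>c\<in>C. (k c / g c c) *\<^sub>R c) c0 = (\<Sum>c\<in>C. k c / g c c * g c c0)"
    by (simp add: linear_sum[of "\<lambda>x. g x c0"] bilinear_lmul[OF assms(1)])
  also have "\<dots> = (\<Sum>c\<in>C. if c = c0 then k c0 else 0)"
    using assms(3-5) by (intro sum.cong) (auto simp: pairwise_def)
  finally show ?thesis using assms(2,5) by simp
qed

lemma bilinear_orthogonal_spanning_set_exists:
  fixes g :: "'a::real_vector \<Rightarrow> 'a \<Rightarrow> real"
  assumes bil: "bilinear g" and sym: "\<And>u v. g u v = g v u"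
    and pos: "\<And>v. v \<noteq> 0 \<Longrightarrow> g v v > 0" and "finite B"
  shows "\<exists>C. finite C \<and> span C = span B \<and> 0 \<notin> C \<and> pairwise (\<lambda>x y. g x y = 0) C"
  using \<open>finite B\<close>
proof (induction B rule: finite_induct)
  case empty
  show ?case by (intro exI[of _ "{}"]) auto
next
  case (insert x B)
  then obtain C where C: "finite C" "span C = span B" "0 \<notin> C" "pairwise (\<lambda>x y. g x y = 0) C"
    by blast
  have C_nondeg: "g c c \<noteq> 0" if "c \<in> C" for c
    using pos[of c] C(3) that by (metis less_irrefl)
  define x' where "x' = x - (\<Sum>c\<in>C. (g x c / g c c) *\<^sub>R c)"
  have x'_orth: "g x' c = 0" if "c \<in> C" for c
    using bilinear_orthogonal_expansion[OF bil C(1,4) C_nondeg that]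
    by (simp add: x'_def bilinear_lsub[OF bil])
  have "x - x' \<in> span C"
    by (simp add: x'_def span_sum span_scale span_base)
  then have span_x': "span (insert x' C) = span (insert x B)"
    using C(2) eq_span_insert_eq span_insert by metis
  show ?case
  proof (cases "x' = 0")
    case True
    then show ?thesis
      using C span_x' by (metis span_insert_0)
  next
    case False
    then have "x' \<notin> C" using x'_orth pos by force
    then have "pairwise (\<lambda>x y. g x y = 0) (insert x' C)"
      using C(4) x'_orth sym by (auto simp: pairwise_insert)
    then show ?thesis
      using C False span_x' by (intro exI[of _ "insert x' C"]) auto
  qed
qed

lemma bilinear_representation_unique:
  fixes g :: "'a::real_vector \<Rightarrow> 'a \<Rightarrow> real"
  assumes bil: "bilinear g" and pos: "\<And>v. v \<noteq> 0 \<Longrightarrow> g v v > 0" and "subspace V"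
    and "r \<in> V" "r' \<in> V" and eq: "\<And>v. v \<in> V \<Longrightarrow> g r v = g r' v"
  shows "r = r'"
proof (rule ccontr)
  assume "r \<noteq> r'"
  then have "g (r - r') (r - r') > 0" using pos by simp
  moreover have "g (r - r') (r - r') = 0"
    using eq[of "r - r'"] assms(3-5) by (simp add: subspace_diff bilinear_lsub[OF bil])
  ultimately show False by simp
qed

lemma bilinear_representation_ex1:
  fixes g :: "'a::real_vector \<Rightarrow> 'a \<Rightarrow> real"
  assumes bil: "bilinear g" and sym: "\<And>u v. g u v = g v u"
    and pos: "\<And>v. v \<noteq> 0 \<Longrightarrow> g v v > 0" and "finite B" and "linear f"
  shows "\<exists>!r. r \<in> span B \<and> (\<forall>v\<in>span B. g r v = f v)"
proof -
  obtain C where C: "finite C" "span C = span B" "0 \<notin> C" "pairwise (\<lambda>x y. g x y = 0) C"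
    using bilinear_orthogonal_spanning_set_exists[OF bil sym pos \<open>finite B\<close>] by blast
  have C_nondeg: "g c c \<noteq> 0" if "c \<in> C" for c
    using pos[of c] C(3) that by (metis less_irrefl)
  define r where "r = (\<Sum>c\<in>C. (f c / g c c) *\<^sub>R c)"
  have "r \<in> span B"
    unfolding r_def C(2)[symmetric] by (intro span_sum span_scale span_base)
  moreover have "g r v = f v" if "v \<in> span B" for v
  proof (rule linear_eq_on_span[where B = C])
    show "linear (g r)" using bil by (simp add: bilinear_def)
    show "g r c = f c" if "c \<in> C" for c
      unfolding r_def by (rule bilinear_orthogonal_expansion[OF bil C(1,4) C_nondeg that])
  qed (use C(2) that \<open>linear f\<close> in auto)
  ultimately show ?thesis
    using bilinear_representation_unique[OF bil pos subspace_span[of B]] by auto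
qed

locale splitting_operators =
  fixes a :: "'a::real_inner \<Rightarrow> 'a \<Rightarrow> real" and \<tau> :: real and V1 :: "'a set"
  assumes a_bilinear: "bilinear a" and a_sym: "\<And>u v. a u v = a v u"
    and a_pos: "\<And>v. v \<noteq> 0 \<Longrightarrow> a v v > 0"
    and V1_finite_dim: "\<exists>B. finite B \<and> span B = V1"
begin

abbreviation "m \<equiv> mt_inner a \<tau>"
abbreviation "b \<equiv> b_op a \<tau> V1"
abbreviation "c \<equiv> c_op a \<tau> V1"
abbreviation "d \<equiv> d_op a V1"

lemma subspace_V1: "subspace V1"
  using V1_finite_dim subspace_span by blast

lemmas a_linear_simps =
  bilinear_ladd[OF a_bilinear] bilinear_radd[OF a_bilinear]
  bilinear_lsub[OF a_bilinear] bilinear_rsub[OF a_bilinear]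
  bilinear_lmul[OF a_bilinear] bilinear_rmul[OF a_bilinear]

lemma a_diff_self: "a (u - v) (u - v) = a u u - 2 * a u v + a v v"
  using a_sym[of v u] by (simp add: a_linear_simps)

lemma a_nonneg: "0 \<le> a v v"
  using a_pos[of v] bilinear_lzero[OF a_bilinear] by (cases "v = 0") auto

lemma m_bilinear: "bilinear m"
  using a_bilinear unfolding bilinear_def mt_inner_def
  by (auto intro!: linearI simp: a_linear_simps algebra_simps)

lemmas m_linear_simps =
  bilinear_ladd[OF m_bilinear] bilinear_radd[OF m_bilinear]
  bilinear_lsub[OF m_bilinear] bilinear_rsub[OF m_bilinear]
  bilinear_lmul[OF m_bilinear] bilinear_rmul[OF m_bilinear]

lemma m_sym: "m u v = m v u"
  by (simp add: mt_inner_def a_sym inner_commute)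

lemma m_diff_self: "m (u - v) (u - v) = m u u - 2 * m u v + m v v"
  using m_sym[of v u] by (simp add: m_linear_simps)

lemma m_self: "m v v = (norm v)\<^sup>2 + \<tau>\<^sup>2 / 2 * a v v"
  by (simp add: mt_inner_def power2_norm_eq_inner)

lemma m_pos: "v \<noteq> 0 \<Longrightarrow> m v v > 0"
  using a_nonneg[of v] by (simp add: m_self add_pos_nonneg)

lemma m_representation_unique:
  "r \<in> V1 \<Longrightarrow> r' \<in> V1 \<Longrightarrow> (\<And>v. v \<in> V1 \<Longrightarrow> m r v = m r' v) \<Longrightarrow> r = r'"
  using bilinear_representation_unique[OF m_bilinear m_pos subspace_V1] by blast

lemma m_representation_ex1: "linear f \<Longrightarrow> \<exists>!r. r \<in> V1 \<and> (\<forall>v\<in>V1. m r v = f v)"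
  using V1_finite_dim bilinear_representation_ex1[OF m_bilinear m_sym m_pos] by blast

lemma a_representation_ex1: "linear f \<Longrightarrow> \<exists>!r. r \<in> V1 \<and> (\<forall>v\<in>V1. a r v = f v)"
  using V1_finite_dim bilinear_representation_ex1[OF a_bilinear a_sym a_pos] by blast

lemma linear_scaled_a: "linear (\<lambda>v. k * a u v)"
  by (rule linearI) (simp_all add: a_linear_simps algebra_simps)

lemma b_op: "b u \<in> V1" "v \<in> V1 \<Longrightarrow> m (b u) v = inner u v"
  using theI'[OF m_representation_ex1[OF bounded_linear_inner_right[THEN bounded_linear.linear]]]
  unfolding b_op_def by blast+

lemma c_op: "c u \<in> V1" "v \<in> V1 \<Longrightarrow> m (c u) v = \<tau>\<^sup>2 / 2 * a u v"
  using theI'[OF m_representation_ex1[OF linear_scaled_a]] unfolding c_op_def by blast+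

lemma d_op: "d u \<in> V1" "v \<in> V1 \<Longrightarrow> a (d u) v = a u v"
  using theI'[OF a_representation_ex1[OF linear_scaled_a[of 1]]] unfolding d_op_def by auto

lemma b_op_add: "b (u + v) = b u + b v"
  by (rule m_representation_unique)
    (simp_all add: b_op subspace_add[OF subspace_V1] m_linear_simps inner_add_left)

lemma c_op_eq: "c y = d y - b (d y)"
proof (rule m_representation_unique)
  show "d y - b (d y) \<in> V1" using subspace_V1 by (simp add: subspace_diff b_op d_op)
  fix v assume "v \<in> V1"
  then show "m (c y) v = m (d y - b (d y)) v"
    by (simp add: c_op b_op d_op m_linear_simps mt_inner_def[of _ _ "d y"])
qed (simp add: c_op)

lemma s_norm2_eq: "s_norm2 a \<tau> V1 v = (norm (v - b v))\<^sup>2 + \<tau>\<^sup>2 / 2 * a (b v) (b v)"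
proof -
  have "m (b v) (b v) = inner v (b v)" by (simp add: b_op)
  then show ?thesis
    unfolding s_norm2_def mt_norm2_def
    by (simp add: m_self power2_norm_eq_inner inner_diff_left inner_diff_right inner_commute)
qed

lemma s_norm2_nonneg: "0 \<le> s_norm2 a \<tau> V1 v"
  by (simp add: s_norm2_eq a_nonneg)

lemma n_norm2_eq: "n_norm2 a \<tau> V1 y = \<tau>\<^sup>2 / 2 * a (y - d y) (y - d y)"
proof -
  let ?e = "d y" and ?h = "b (d y)"
  have m_facts: "m ?h ?h = inner ?e ?h" "m ?h ?e = inner ?e ?e" "m ?e ?h = inner ?e ?e"
    using b_op d_op m_sym by metis+
  have a_facts: "a ?e ?e = a y ?e" "a ?e y = a y ?e"
    using d_op a_sym by metis+
  show ?thesis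
    unfolding n_norm2_def s_norm2_def mt_norm2_def c_op_eq
    by (simp add: m_linear_simps a_linear_simps m_facts a_facts m_self[of ?e]
        power2_norm_eq_inner algebra_simps)
qed

lemma n_norm2_nonneg: "0 \<le> n_norm2 a \<tau> V1 y"
  by (simp add: n_norm2_eq a_nonneg)

lemma s_norm2_plus_n_norm2:
  "s_norm2 a \<tau> V1 (x + d y) + n_norm2 a \<tau> V1 y
    = (norm x)\<^sup>2 - m (b x - c y) (b x - c y) + \<tau>\<^sup>2 / 2 * a y y"
proof -
  let ?e = "d y" and ?h = "b (d y)"
  have m_facts: "m ?h ?h = inner ?e ?h" "m ?h ?e = inner ?e ?e" "m ?e ?h = inner ?e ?e"
    "m (b x) ?e = inner x ?e" "m ?e (b x) = inner x ?e" "m ?h (b x) = m (b x) ?h"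
    using b_op d_op m_sym by metis+
  have a_facts: "a ?e ?e = a y ?e" "a ?e y = a y ?e"
    using d_op a_sym by metis+
  show ?thesis
    unfolding n_norm2_eq s_norm2_def mt_norm2_def c_op_eq b_op_add
    by (simp add: m_linear_simps a_linear_simps m_facts a_facts m_self[of ?e]
        power2_norm_eq_inner inner_commute algebra_simps)
qed

definition reduced_energy :: "'a \<Rightarrow> 'a \<Rightarrow> 'a \<Rightarrow> 'a \<Rightarrow> real" where
  "reduced_energy x' x y' y = (norm x')\<^sup>2 + (norm x)\<^sup>2 + (norm (y' - y))\<^sup>2 + \<tau>\<^sup>2 * a y' y
    - 2 * m (b x' - c y') (b x - c y)"

lemma energy_eq_reduced_energy:
  "energy a \<tau> V1 u1 u2 n = reduced_energy (u1 (n+1)) (u1 n) (u2 (n+1)) (u2 n)"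
proof -
  have regroup: "b x' - c y' - b x + c y = (b x' - c y') - (b x - c y)" for x' y' x y
    by simp
  show ?thesis
    using s_norm2_plus_n_norm2[of "u1 (n+1)" "u2 (n+1)"] s_norm2_plus_n_norm2[of "u1 n" "u2 n"]
    unfolding energy_def E_terms_def reduced_energy_def mt_norm2_def regroup m_diff_self a_diff_self
    by (simp add: algebra_simps)
qed

lemma average_eq_of_scheme:
  assumes "x0 \<in> V1" "x2 \<in> V1"
    and scheme: "\<And>w. w \<in> V1 \<Longrightarrow>
      inner (x2 - 2 *\<^sub>R x1 + x0) w + \<tau>\<^sup>2 / 2 * a (x2 + x0 + 2 *\<^sub>R y1) w = 0"
  shows "x2 + x0 = 2 *\<^sub>R (b x1 - c y1)"
proof (rule m_representation_unique)
  show "x2 + x0 \<in> V1" "2 *\<^sub>R (b x1 - c y1) \<in> V1"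
    using assms(1,2) subspace_V1 b_op c_op
    by (simp_all add: subspace_add subspace_diff subspace_scale)
  fix v assume "v \<in> V1"
  then have "m (2 *\<^sub>R (b x1 - c y1)) v = 2 * inner x1 v - \<tau>\<^sup>2 * a y1 v"
    by (simp add: m_linear_simps b_op c_op)
  moreover have "m (x2 + x0) v = 2 * inner x1 v - \<tau>\<^sup>2 * a y1 v"
    using scheme[OF \<open>v \<in> V1\<close>]
    by (simp add: mt_inner_def a_linear_simps algebra_simps add_divide_distrib)
  ultimately show "m (x2 + x0) v = m (2 *\<^sub>R (b x1 - c y1)) v" by simp
qed

lemma reduced_energy_conserved:
  assumes average: "x2 + x0 = 2 *\<^sub>R (b x1 - c y1)"
    and scheme: "inner (y2 - 2 *\<^sub>R y1 + y0) (y2 - y0)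
      + \<tau>\<^sup>2 / 2 * a (x2 + x0 + 2 *\<^sub>R y1) (y2 - y0) = 0"
  shows "reduced_energy x2 x1 y2 y1 = reduced_energy x1 x0 y1 y0"
proof -
  define \<beta> where "\<beta> = b x1 - c y1"
  have "\<beta> \<in> V1" unfolding \<beta>_def using subspace_V1 b_op c_op by (simp add: subspace_diff)
  then have m_parts: "m (b x2 - c y2) \<beta> = inner x2 \<beta> - \<tau>\<^sup>2 / 2 * a y2 \<beta>"
      "m \<beta> (b x0 - c y0) = inner x0 \<beta> - \<tau>\<^sup>2 / 2 * a y0 \<beta>"
    using m_sym[of \<beta>] by (simp_all add: m_linear_simps b_op c_op)
  have "2 * inner x2 \<beta> - 2 * inner x0 \<beta> = inner (x2 - x0) (x2 + x0)"
    using average by (simp add: \<beta>_def inner_diff_left)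
  also have "\<dots> = (norm x2)\<^sup>2 - (norm x0)\<^sup>2"
    by (simp add: power2_norm_eq_inner algebra_simps inner_commute)
  finally have x_part: "2 * inner x2 \<beta> - 2 * inner x0 \<beta> = (norm x2)\<^sup>2 - (norm x0)\<^sup>2" .
  have y_part: "inner (y2 - 2 *\<^sub>R y1 + y0) (y2 - y0) = (norm (y2 - y1))\<^sup>2 - (norm (y1 - y0))\<^sup>2"
    by (simp add: power2_norm_eq_inner inner_add_left inner_diff_left inner_diff_right
        inner_commute algebra_simps)
  have "x2 + x0 + 2 *\<^sub>R y1 = 2 *\<^sub>R (\<beta> + y1)"
    using average by (simp add: \<beta>_def scaleR_add_right)
  then have a_part: "\<tau>\<^sup>2 / 2 * a (x2 + x0 + 2 *\<^sub>R y1) (y2 - y0)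
      = \<tau>\<^sup>2 * (a y2 \<beta> - a y0 \<beta>) + \<tau>\<^sup>2 * a y2 y1 - \<tau>\<^sup>2 * a y1 y0"
    by (simp add: a_linear_simps a_sym[of \<beta>] a_sym[of y1] algebra_simps)
  show ?thesis
    using scheme x_part y_part a_part
    unfolding reduced_energy_def \<beta>_def[symmetric] m_parts by (simp add: algebra_simps)
qed

lemma cfl_term_nonneg:
  assumes "v \<noteq> 0 \<Longrightarrow> a v v / (norm v)\<^sup>2 \<le> 2 / \<tau>\<^sup>2"
  shows "0 \<le> (norm v)\<^sup>2 - \<tau>\<^sup>2 / 2 * a v v"
proof (cases "v = 0 \<or> \<tau> = 0")
  case True
  then show ?thesis by (auto simp: bilinear_lzero[OF a_bilinear])
next
  case False
  then show ?thesis using assms by (simp add: field_simps)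
qed

lemma E_terms_nonneg:
  assumes "0 \<le> (norm (u2 (n+1) - u2 n))\<^sup>2 - \<tau>\<^sup>2 / 2 * a (u2 (n+1) - u2 n) (u2 (n+1) - u2 n)"
  shows "\<forall>t \<in> set (E_terms a \<tau> V1 u1 u2 n). 0 \<le> t"
  using assms a_nonneg
  by (simp add: E_terms_def mt_norm2_def m_self s_norm2_nonneg n_norm2_nonneg)

end

theorem mainTheorem4:
  fixes a :: "'a::real_inner \<Rightarrow> 'a \<Rightarrow> real"
    and V1 V2 :: "'a set" and \<tau> :: real and N :: nat
    and u1 u2 :: "nat \<Rightarrow> 'a"
  assumes a_bilinear: "bilinear a"
    and a_sym: "\<And>u v. a u v = a v u"
    and a_pos: "\<And>v. v \<noteq> 0 \<Longrightarrow> a v v > 0"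
    and V1_sub: "subspace V1" and V2_sub: "subspace V2"
    and V1_fin: "\<exists>B. finite B \<and> span B = V1"
    and V2_fin: "\<exists>B. finite B \<and> span B = V2"
    and orth: "\<And>x y. x \<in> V1 \<Longrightarrow> y \<in> V2 \<Longrightarrow> inner x y = 0"
    and tau_pos: "\<tau> > 0" and N_ge: "N \<ge> 2"
    and u1_in: "\<And>n. n \<le> N \<Longrightarrow> u1 n \<in> V1"
    and u2_in: "\<And>n. n \<le> N \<Longrightarrow> u2 n \<in> V2"
    and scheme1: "\<And>n w. 1 \<le> n \<Longrightarrow> n \<le> N - 1 \<Longrightarrow> w \<in> V1 \<Longrightarrow>
        inner (u1 (n+1) - 2 *\<^sub>R u1 n + u1 (n-1)) w
        + \<tau>^2 / 2 * a (u1 (n+1) + u1 (n-1) + 2 *\<^sub>R u2 n) w = 0"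
    and scheme2: "\<And>n w. 1 \<le> n \<Longrightarrow> n \<le> N - 1 \<Longrightarrow> w \<in> V2 \<Longrightarrow>
        inner (u2 (n+1) - 2 *\<^sub>R u2 n + u2 (n-1)) w
        + \<tau>^2 / 2 * a (u1 (n+1) + u1 (n-1) + 2 *\<^sub>R u2 n) w = 0"
  shows "(\<forall>n. 1 \<le> n \<and> n \<le> N - 1 \<longrightarrow>
            energy a \<tau> V1 u1 u2 n = energy a \<tau> V1 u1 u2 (n - 1))
       \<and> ((\<forall>v\<in>V2. v \<noteq> 0 \<longrightarrow> a v v / (norm v)^2 \<le> 2 / \<tau>^2) \<longrightarrow>
            (\<forall>n \<le> N - 1. \<forall>t \<in> set (E_terms a \<tau> V1 u1 u2 n).
                0 \<le> t \<and> t \<le> energy a \<tau> V1 u1 u2 0))"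
proof -
  interpret splitting_operators a \<tau> V1
    using a_bilinear a_sym a_pos V1_fin by unfold_locales
  have conserved: "energy a \<tau> V1 u1 u2 n = energy a \<tau> V1 u1 u2 (n - 1)"
    if n: "1 \<le> n" "n \<le> N - 1" for n
  proof -
    have "u1 (n+1) + u1 (n-1) = 2 *\<^sub>R (b (u1 n) - c (u2 n))"
      using average_eq_of_scheme[OF u1_in u1_in scheme1] n by auto
    moreover have "u2 (n+1) - u2 (n-1) \<in> V2"
      using u2_in n V2_sub by (simp add: subspace_diff)
    ultimately have "reduced_energy (u1 (n+1)) (u1 n) (u2 (n+1)) (u2 n)
        = reduced_energy (u1 n) (u1 (n-1)) (u2 n) (u2 (n-1))"
      using reduced_energy_conserved scheme2[OF n] by blast
    moreover have "n - 1 + 1 = n" using n by simp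
    ultimately show ?thesis
      using energy_eq_reduced_energy[of _ _ n] energy_eq_reduced_energy[of _ _ "n - 1"] by metis
  qed
  have energy_const: "energy a \<tau> V1 u1 u2 n = energy a \<tau> V1 u1 u2 0" if "n \<le> N - 1" for n
    using that by (induction n) (simp_all add: conserved)
  show ?thesis
  proof (intro conjI allI impI ballI)
    show "energy a \<tau> V1 u1 u2 n = energy a \<tau> V1 u1 u2 (n - 1)" if "1 \<le> n \<and> n \<le> N - 1" for n
      using conserved that by blast
    fix n t
    assume cfl: "\<forall>v\<in>V2. v \<noteq> 0 \<longrightarrow> a v v / (norm v)^2 \<le> 2 / \<tau>^2"
      and n: "n \<le> N - 1" and t: "t \<in> set (E_terms a \<tau> V1 u1 u2 n)"
    have "u2 (n+1) - u2 n \<in> V2"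
      using u2_in n N_ge V2_sub by (simp add: subspace_diff)
    then have nonneg: "\<forall>t \<in> set (E_terms a \<tau> V1 u1 u2 n). 0 \<le> t"
      using E_terms_nonneg cfl_term_nonneg cfl by blast
    then show "0 \<le> t" using t by blast
    have "t \<le> energy a \<tau> V1 u1 u2 n"
      unfolding energy_def by (rule member_le_sum_list[OF t]) (use nonneg in blast)
    then show "t \<le> energy a \<tau> V1 u1 u2 0"
      using energy_const[OF n] by simp
  qed
qed

end
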